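(* Let $p>2$ and let $F$, $K$, $G$, $J$, $N$, $M_\gamma$ be as in the context. Suppose $\xi_p\in N(K^\times)$. Then for every $\gamma\in K^\times$ with $\dim_{\mathbb{F}_p}M_\gamma=2$ there exists $[\alpha]\in J$ with $\langle N([\alpha])\rangle = M_\gamma^G$.
   Context: Let $p$ be a prime and $F$ a field of characteristic different from $p$ containing a primitive $p$th root of unity $\xi_p$. Let $a\in F^\times\setminus F^{\times p}$ and $K=F(\sqrt[p]{a})$; $K^\times=K\setminus\{0\}$. Let $G=\mathrm{Gal}(K/F)=\langle\sigma\rangle$, where $\sigma(\sqrt[p]{a})/\sqrt[p]{a}=\xi_p$. Let $J=K^\times/K^{\times p}$, an $\mathbb{F}_p[G]$-module with elements $[\gamma]$. Let $N=1+\sigma+\dots+\sigma^{p-1}$, acting on $J$; $N(K^\times)$ is the norm group of $K/F$. For $\gamma\in K^\times$, $M_\gamma$ denotes the cyclic $\mathbb{F}_p[G]$-submodule of $J$ generated by $[\gamma]$. $\langle\cdot\rangle$ denotes $\mathbb{F}_p$-span and $V^G$ the $G$-fixed submodule. *)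

theory Defs
  imports "HOL-Computational_Algebra.Primes"
begin

text \<open>Elements of J = K^x / K^x^p are represented by elements of K^x; two nonzero
  elements represent the same class iff their quotient is a p-th power.
  Subsets of J are represented by the (class-saturated) sets of representatives.\<close>

definition same_cls :: "nat \<Rightarrow> 'k::field \<Rightarrow> 'k \<Rightarrow> bool" where
  "same_cls p x y \<longleftrightarrow> x \<noteq> 0 \<and> y \<noteq> 0 \<and> (\<exists>z. z \<noteq> 0 \<and> x = y * z ^ p)"

text \<open>F_p-span of a set of classes (written multiplicatively): all classes of finite
  products of representatives with exponents.\<close>
definition Jspan :: "nat \<Rightarrow> 'k::field set \<Rightarrow> 'k set" where
  "Jspan p S = {x. x \<noteq> 0 \<and> (\<exists>T e. finite T \<and> T \<subseteq> S \<and> same_cls p x (\<Prod>s\<in>T. s ^ e s))}"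

text \<open>F_p-linear independence of the classes of the elements of B
  (exponents taken in {0..p-1} as representatives of F_p).\<close>
definition Jindep :: "nat \<Rightarrow> 'k::field set \<Rightarrow> bool" where
  "Jindep p B \<longleftrightarrow> (\<forall>T e. finite T \<and> T \<subseteq> B \<and> (\<forall>s\<in>T. e s < p)
      \<and> same_cls p (\<Prod>s\<in>T. s ^ e s) 1 \<longrightarrow> (\<forall>s\<in>T. e s = 0))"

definition Jdim_eq :: "nat \<Rightarrow> 'k::field set \<Rightarrow> nat \<Rightarrow> bool" where
  "Jdim_eq p S d \<longleftrightarrow> (\<exists>B. finite B \<and> card B = d \<and> B \<subseteq> S \<and> 0 \<notin> B \<and> Jindep p B \<and> Jspan p B = S)"

definition Jnorm :: "nat \<Rightarrow> ('k::field \<Rightarrow> 'k) \<Rightarrow> 'k \<Rightarrow> 'k" where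
  "Jnorm p \<sigma> x = (\<Prod>i<p. (\<sigma> ^^ i) x)"

text \<open>M_gamma: cyclic F_p[G]-submodule generated by [gamma]; the element
  sum_i c_i sigma^i of F_p[G] sends [gamma] to [prod_i sigma^i(gamma)^(c_i)].\<close>
definition Mcyc :: "nat \<Rightarrow> ('k::field \<Rightarrow> 'k) \<Rightarrow> 'k \<Rightarrow> 'k set" where
  "Mcyc p \<sigma> \<gamma> = {x. x \<noteq> 0 \<and> (\<exists>c::nat \<Rightarrow> nat. same_cls p x (\<Prod>i<p. ((\<sigma> ^^ i) \<gamma>) ^ c i))}"

definition Jfixed :: "nat \<Rightarrow> ('k::field \<Rightarrow> 'k) \<Rightarrow> 'k set \<Rightarrow> 'k set" where
  "Jfixed p \<sigma> S = {x \<in> S. same_cls p (\<sigma> x) x}"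

end

theory Submission
  imports Defs "HOL-Number_Theory.Cong" "HOL-Library.FuncSet"
begin

(*
  Let X = sigma - 1 act on J, so that X [y] = [sigma y / y].
  Since (sigma - 1)^p = sigma^p - 1 = 0 in F_p[G], X is nilpotent on J, and whenever
  X^n [y] = 0 but X^(n-1) [y] is nonzero, the classes [y], X [y], ..., X^(n-1) [y] are
  independent.  Hence dim M_gamma = 2 forces X [gamma] nonzero and X^2 [gamma] = 0, and
  then the fixed part of M_gamma is spanned by the class of c = sigma gamma / gamma.

  It remains to see that the class of c, which has norm 1 and is G-fixed, is a norm class.
  Write sigma c = c w^p.  Correcting w by a power of beta, where N beta = xi, Hilbert 90
  replaces c inside its class by y with sigma y * beta^(p j) = y.  From beta one builds z
  with sigma z = z beta^p and N z = a; if p did not divide j, then y z^j would lie in F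
  and exhibit a^j, hence a, as a p-th power in F.  So y is G-fixed, lies in F, and
  y^p = N y shows that y is a norm up to a root of unity xi^m = N (beta^m).
*)

section \<open>Classes modulo \<open>p\<close>-th powers\<close>

lemma prime_not_dvd_imp_inverse_mod:
  fixes p e :: nat
  assumes "prime p" "\<not> p dvd e"
  obtains x y where "e * x = p * y + 1"
proof -
  have "e \<noteq> 0" using assms(2) by (metis dvd_0_right)
  moreover have "gcd e p = 1"
    using prime_imp_coprime[OF assms] by (simp add: coprime_iff_gcd_eq_1 gcd.commute)
  ultimately show thesis using bezout_nat[of e p] that by metis
qed

lemma nontrivial_solution_mod:
  fixes x :: "nat \<Rightarrow> nat \<Rightarrow> nat"
  assumes "1 < p" "m < n"
  shows "\<exists>e. (\<forall>i<n. e i < p) \<and> (\<exists>i<n. e i \<noteq> 0) \<and> (\<forall>j<m. p dvd (\<Sum>i<n. e i * x i j))"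
proof -
  define A where "A = {..<n} \<rightarrow>\<^sub>E {..<p}"
  define \<phi> where "\<phi> e = (\<lambda>j\<in>{..<m}. (\<Sum>i<n. e i * x i j) mod p)" for e
  have "\<phi> ` A \<subseteq> {..<m} \<rightarrow>\<^sub>E {..<p}"
    unfolding \<phi>_def using assms(1) by (auto intro!: restrict_PiE_iff[THEN iffD2])
  moreover have "card ({..<m} \<rightarrow>\<^sub>E {..<p}) < card A"
    using assms by (simp add: A_def card_PiE power_strict_increasing)
  ultimately have "\<not> inj_on \<phi> A"
    by (metis card_inj_on_le finite_PiE finite_lessThan leD)
  then obtain e1 e2 where e12: "e1 \<in> A" "e2 \<in> A" "e1 \<noteq> e2" "\<phi> e1 = \<phi> e2"
    by (auto simp: inj_on_def)
  define d where "d i = (e1 i + (p - e2 i)) mod p" for i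
  have e_lt: "e1 i < p" "e2 i < p" if "i < n" for i
    using e12(1,2) that by (auto simp: A_def)
  have d_cong: "[d i + e2 i = e1 i] (mod p)" if "i < n" for i
  proof -
    have "[d i + e2 i = e1 i + (p - e2 i) + e2 i] (mod p)"
      unfolding d_def by (intro cong_add) (simp_all add: cong_def)
    also have "e1 i + (p - e2 i) + e2 i = e1 i + p * 1"
      using e_lt[OF that] by simp
    finally show ?thesis by (simp add: cong_def)
  qed
  have "\<forall>i<n. d i < p"
    using assms(1) by (simp add: d_def)
  moreover have "\<exists>i<n. d i \<noteq> 0"
  proof (rule ccontr)
    assume all_zero: "\<not> (\<exists>i<n. d i \<noteq> 0)"
    have "e2 i = e1 i" if "i < n" for i
      using d_cong[OF that] e_lt[OF that] all_zero that
      by (metis add_0 cong_less_modulus_unique_nat)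
    then have "e1 = e2"
      using e12(1,2) unfolding A_def by (metis PiE_ext lessThan_iff)
    then show False using e12(3) by simp
  qed
  moreover have "p dvd (\<Sum>i<n. d i * x i j)" if "j < m" for j
  proof -
    have "[(\<Sum>i<n. d i * x i j) + (\<Sum>i<n. e2 i * x i j) = (\<Sum>i<n. e1 i * x i j)] (mod p)"
      unfolding sum.distrib[symmetric] add_mult_distrib[symmetric]
      by (intro cong_sum cong_mult d_cong) auto
    also have "[(\<Sum>i<n. e1 i * x i j) = (\<Sum>i<n. e2 i * x i j)] (mod p)"
      using fun_cong[OF e12(4), of j] that by (simp add: \<phi>_def cong_def)
    finally show ?thesis
      using cong_add_rcancel_nat[of _ "\<Sum>i<n. e2 i * x i j" 0 p] by (simp add: cong_0_iff)
  qed
  ultimately show ?thesis by blast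
qed

lemma same_cls_nonzero: "same_cls p x y \<Longrightarrow> x \<noteq> 0 \<and> y \<noteq> 0"
  by (simp add: same_cls_def)

lemma same_cls_refl: "x \<noteq> 0 \<Longrightarrow> same_cls p x x"
  unfolding same_cls_def by (intro conjI exI[of _ 1]) auto

lemma same_cls_sym:
  assumes "same_cls p x y"
  shows "same_cls p y x"
proof -
  obtain z where z: "x \<noteq> 0" "y \<noteq> 0" "z \<noteq> 0" "x = y * z ^ p"
    using assms by (auto simp: same_cls_def)
  then have "y = x * inverse z ^ p" by (simp add: power_inverse)
  then show ?thesis using z unfolding same_cls_def by (intro conjI exI[of _ "inverse z"]) auto
qed

lemma same_cls_trans [trans]:
  assumes "same_cls p x y" "same_cls p y w"
  shows "same_cls p x w"
proof -
  obtain z where z: "x \<noteq> 0" "z \<noteq> 0" "x = y * z ^ p" using assms(1) by (auto simp: same_cls_def)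
  obtain u where u: "w \<noteq> 0" "u \<noteq> 0" "y = w * u ^ p" using assms(2) by (auto simp: same_cls_def)
  have "x = w * (u * z) ^ p" using z u by (simp add: power_mult_distrib mult.assoc)
  then show ?thesis using z u unfolding same_cls_def by (intro conjI exI[of _ "u * z"]) auto
qed

lemma same_cls_mult:
  assumes "same_cls p x y" "same_cls p x' y'"
  shows "same_cls p (x * x') (y * y')"
proof -
  obtain z where z: "x \<noteq> 0" "y \<noteq> 0" "z \<noteq> 0" "x = y * z ^ p"
    using assms(1) by (auto simp: same_cls_def)
  obtain u where u: "x' \<noteq> 0" "y' \<noteq> 0" "u \<noteq> 0" "x' = y' * u ^ p"
    using assms(2) by (auto simp: same_cls_def)
  have "x * x' = (y * y') * (z * u) ^ p" using z u by (simp add: power_mult_distrib mult_ac)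
  then show ?thesis using z u unfolding same_cls_def by (intro conjI exI[of _ "z * u"]) auto
qed

lemma same_cls_power:
  assumes "same_cls p x y"
  shows "same_cls p (x ^ n) (y ^ n)"
proof -
  obtain z where z: "x \<noteq> 0" "y \<noteq> 0" "z \<noteq> 0" "x = y * z ^ p"
    using assms by (auto simp: same_cls_def)
  have "x ^ n = y ^ n * (z ^ n) ^ p"
    using z by (simp add: power_mult_distrib power_mult[symmetric] mult.commute)
  then show ?thesis using z unfolding same_cls_def by (intro conjI exI[of _ "z ^ n"]) auto
qed

lemma same_cls_prod:
  assumes "finite A" "\<And>i. i \<in> A \<Longrightarrow> same_cls p (f i) (g i)"
  shows "same_cls p (\<Prod>i\<in>A. f i) (\<Prod>i\<in>A. g i)"
  using assms by (induction A rule: finite_induct) (auto simp: same_cls_refl same_cls_mult)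

lemma same_cls_mult_pth_power: "x \<noteq> 0 \<Longrightarrow> y \<noteq> 0 \<Longrightarrow> same_cls p (x * y ^ p) x"
  unfolding same_cls_def by (intro conjI exI[of _ y]) auto

lemma same_cls_power_dvd:
  assumes "x \<noteq> 0" "p dvd n"
  shows "same_cls p (x ^ n) 1"
proof -
  obtain k where "n = p * k" using assms(2) by (rule dvdE)
  then have "x ^ n = 1 * (x ^ k) ^ p" by (simp add: power_mult[symmetric] mult.commute)
  then show ?thesis using assms(1) unfolding same_cls_def by (intro conjI exI[of _ "x ^ k"]) auto
qed

lemma same_cls_cancel_left:
  assumes "same_cls p (y * x) (y * x')" "y \<noteq> 0"
  shows "same_cls p x x'"
proof -
  obtain z where z: "y * x \<noteq> 0" "y * x' \<noteq> 0" "z \<noteq> 0" "y * x = y * x' * z ^ p"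
    using assms(1) by (auto simp: same_cls_def)
  have "x = x' * z ^ p" using z assms(2) by (simp add: mult.assoc)
  then show ?thesis using z unfolding same_cls_def by (intro conjI exI[of _ z]) auto
qed

lemma same_cls_one_of_power:
  assumes "prime p" "same_cls p (x ^ e) 1" "\<not> p dvd e" "x \<noteq> 0"
  shows "same_cls p x 1"
proof -
  obtain a b where ab: "e * a = p * b + 1"
    using prime_not_dvd_imp_inverse_mod[OF assms(1,3)] by blast
  have "(x ^ e) ^ a = x ^ (p * b + 1)"
    by (simp add: ab power_mult[symmetric])
  also have "\<dots> = x * (x ^ b) ^ p"
    by (simp add: power_add mult.commute[of p b] power_mult)
  finally have "(x ^ e) ^ a = x * (x ^ b) ^ p" .
  then have "same_cls p (x * (x ^ b) ^ p) 1"
    using same_cls_power[OF assms(2), of a] by simp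
  moreover have "same_cls p x (x * (x ^ b) ^ p)"
    using same_cls_sym[OF same_cls_mult_pth_power[of x "x ^ b" p]] assms(4) by simp
  ultimately show ?thesis
    by (rule same_cls_trans[rotated])
qed

lemma Jspan_singleton: "Jspan p {c} = {x. \<exists>n. same_cls p x (c ^ n)}"
proof (intro set_eqI iffI; clarsimp)
  fix x assume "x \<in> Jspan p {c}"
  then obtain T e where "T \<subseteq> {c}" "same_cls p x (\<Prod>s\<in>T. s ^ e s)"
    unfolding Jspan_def by blast
  then show "\<exists>n. same_cls p x (c ^ n)"
    by (cases "T = {}") (auto intro: exI[of _ 0] exI[of _ "e c"] dest: subset_singletonD)
next
  fix x n assume "same_cls p x (c ^ n)"
  then show "x \<in> Jspan p {c}"
    unfolding Jspan_def using same_cls_nonzero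
    by (intro CollectI conjI exI[of _ "{c}"] exI[of _ "\<lambda>_. n"]) auto
qed

lemma Jspan_singleton_cong:
  assumes "same_cls p c c'"
  shows "Jspan p {c} = Jspan p {c'}"
proof -
  have *: "same_cls p x (d' ^ n)" if "same_cls p x (d ^ n)" "same_cls p d d'" for x n d d'
    using same_cls_trans[OF that(1) same_cls_power[OF that(2)]] .
  show ?thesis
    unfolding Jspan_singleton using *[OF _ assms] *[OF _ same_cls_sym[OF assms]] by blast
qed

definition cls_indep :: "nat \<Rightarrow> nat \<Rightarrow> (nat \<Rightarrow> 'k::field) \<Rightarrow> bool" where
  "cls_indep p n v \<longleftrightarrow>
     (\<forall>e. (\<forall>i<n. e i < p) \<and> same_cls p (\<Prod>i<n. v i ^ e i) 1 \<longrightarrow> (\<forall>i<n. e i = 0))"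

definition cls_spanned :: "nat \<Rightarrow> 'k::field set \<Rightarrow> nat \<Rightarrow> (nat \<Rightarrow> 'k) \<Rightarrow> bool" where
  "cls_spanned p M m b \<longleftrightarrow> (\<forall>x\<in>M. \<exists>u. same_cls p x (\<Prod>j<m. b j ^ u j))"

lemma cls_indep_le_spanning:
  assumes "1 < p" "cls_indep p n v" "\<And>i. i < n \<Longrightarrow> v i \<in> M"
    and "cls_spanned p M m b" "\<And>j. j < m \<Longrightarrow> b j \<noteq> 0"
  shows "n \<le> m"
proof (rule ccontr)
  assume "\<not> n \<le> m"
  have "\<forall>i. \<exists>u. i < n \<longrightarrow> same_cls p (v i) (\<Prod>j<m. b j ^ u j)"
    using assms(3,4) unfolding cls_spanned_def by blast
  then obtain u where u: "\<And>i. i < n \<Longrightarrow> same_cls p (v i) (\<Prod>j<m. b j ^ u i j)"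
    by metis
  from \<open>\<not> n \<le> m\<close> have "m < n" by simp
  then obtain e where e: "\<forall>i<n. e i < p" "\<exists>i<n. e i \<noteq> 0" "\<forall>j<m. p dvd (\<Sum>i<n. e i * u i j)"
    using nontrivial_solution_mod[OF assms(1), of m n u] by blast
  have "same_cls p (\<Prod>i<n. v i ^ e i) (\<Prod>i<n. (\<Prod>j<m. b j ^ u i j) ^ e i)"
    by (intro same_cls_prod same_cls_power u) auto
  also have "(\<Prod>i<n. (\<Prod>j<m. b j ^ u i j) ^ e i) = (\<Prod>i<n. \<Prod>j<m. b j ^ (e i * u i j))"
    by (simp add: prod_power_distrib power_mult[symmetric] mult.commute)
  also have "\<dots> = (\<Prod>j<m. \<Prod>i<n. b j ^ (e i * u i j))"
    by (rule prod.swap)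
  also have "\<dots> = (\<Prod>j<m. b j ^ (\<Sum>i<n. e i * u i j))"
    by (simp add: power_sum)
  finally have "same_cls p (\<Prod>i<n. v i ^ e i) (\<Prod>j<m. b j ^ (\<Sum>i<n. e i * u i j))" .
  moreover have "same_cls p (\<Prod>j<m. b j ^ (\<Sum>i<n. e i * u i j)) (\<Prod>j<m. 1)"
    using e(3) assms(5) by (intro same_cls_prod same_cls_power_dvd) auto
  ultimately have "same_cls p (\<Prod>i<n. v i ^ e i) (\<Prod>j<m. 1)" by (rule same_cls_trans)
  then have "same_cls p (\<Prod>i<n. v i ^ e i) 1" by simp
  with e(1) have "\<forall>i<n. e i = 0"
    using assms(2) unfolding cls_indep_def by simp
  then show False using e(2) by auto
qed

lemma cls_indep_of_Jindep:
  assumes "bij_betw b {..<d} B" "Jindep p B"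
  shows "cls_indep p d b"
  unfolding cls_indep_def
proof (intro allI impI)
  fix e i assume e: "(\<forall>i<d. e i < p) \<and> same_cls p (\<Prod>i<d. b i ^ e i) 1" and "i < d"
  define e' where "e' s = e (inv_into {..<d} b s)" for s
  have e'_b: "e' (b i) = e i" if "i < d" for i
    using assms(1) that by (simp add: e'_def bij_betw_inv_into_left)
  have "(\<Prod>s\<in>B. s ^ e' s) = (\<Prod>i<d. b i ^ e i)"
    using prod.reindex_bij_betw[OF assms(1), of "\<lambda>s. s ^ e' s"] by (simp add: e'_b)
  moreover have "\<forall>s\<in>B. e' s < p"
    using e assms(1) by (auto simp: e'_def bij_betw_def inv_into_into)
  moreover have "finite B"
    using assms(1) bij_betw_finite by blast
  ultimately have "finite B \<and> B \<subseteq> B \<and> (\<forall>s\<in>B. e' s < p) \<and> same_cls p (\<Prod>s\<in>B. s ^ e' s) 1"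
    using e by simp
  then have "\<forall>s\<in>B. e' s = 0"
    using spec[OF spec[OF assms(2)[unfolded Jindep_def], of B], of e'] by blast
  then show "e i = 0"
    using bij_betwE[OF assms(1)] e'_b \<open>i < d\<close> by fastforce
qed

lemma cls_spanned_Jspan:
  assumes "bij_betw b {..<d} B"
  shows "cls_spanned p (Jspan p B) d b"
  unfolding cls_spanned_def
proof
  fix x assume "x \<in> Jspan p B"
  then obtain T e where T: "T \<subseteq> B" "same_cls p x (\<Prod>s\<in>T. s ^ e s)"
    unfolding Jspan_def by blast
  have "finite B" using assms bij_betw_finite by blast
  then have "(\<Prod>s\<in>T. s ^ e s) = (\<Prod>s\<in>B. s ^ (if s \<in> T then e s else 0))"
    using T(1) by (intro prod.mono_neutral_cong_left) auto
  also have "\<dots> = (\<Prod>i<d. b i ^ (if b i \<in> T then e (b i) else 0))"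
    using prod.reindex_bij_betw[OF assms, of "\<lambda>s. s ^ (if s \<in> T then e s else 0)"] by simp
  finally show "\<exists>u. same_cls p x (\<Prod>j<d. b j ^ u j)"
    using T(2) by auto
qed

lemma Jdim_eq_obtain_basis:
  assumes "Jdim_eq p M d"
  obtains b where "\<And>i. i < d \<Longrightarrow> b i \<in> M" "\<And>i. i < d \<Longrightarrow> b i \<noteq> 0"
    "cls_indep p d b" "cls_spanned p M d b"
proof -
  obtain B where B: "finite B" "card B = d" "B \<subseteq> M" "0 \<notin> B" "Jindep p B" "Jspan p B = M"
    using assms unfolding Jdim_eq_def by blast
  obtain b where b: "bij_betw b {..<d} B"
    using ex_bij_betw_nat_finite[OF B(1)] B(2) by (auto simp: atLeast0LessThan)
  have bB: "b i \<in> B" if "i < d" for i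
    using bij_betwE[OF b] that by simp
  have "b i \<in> M" "b i \<noteq> 0" if "i < d" for i
    using bB[OF that] B(3,4) by auto
  then show thesis
    using that cls_indep_of_Jindep[OF b B(5)] cls_spanned_Jspan[OF b] B(6) by blast
qed

section \<open>A cyclic action of prime order\<close>

lemma funpow_fixed_point: "f x = x \<Longrightarrow> (f ^^ n) x = x"
  by (induction n) simp_all

lemma prod_lessThan_rotate:
  fixes f :: "nat \<Rightarrow> 'a::comm_monoid_mult"
  assumes "f p = f 0"
  shows "(\<Prod>i<p. f (Suc i)) = (\<Prod>i<p. f i)"
proof (cases p)
  case (Suc q)
  then have "(\<Prod>i<p. f (Suc i)) = (\<Prod>i<q. f (Suc i)) * f p" by simp
  also have "\<dots> = (\<Prod>i<p. f i)"
    using Suc assms by (simp add: prod.lessThan_Suc_shift ac_simps del: prod.lessThan_Suc)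
  finally show ?thesis .
qed simp

lemma sum_lessThan_rotate:
  fixes f :: "nat \<Rightarrow> 'a::comm_monoid_add"
  assumes "f p = f 0"
  shows "(\<Sum>i<p. f (Suc i)) = (\<Sum>i<p. f i)"
proof (cases p)
  case (Suc q)
  then have "(\<Sum>i<p. f (Suc i)) = (\<Sum>i<q. f (Suc i)) + f p" by simp
  also have "\<dots> = (\<Sum>i<p. f i)"
    using Suc assms by (simp add: sum.lessThan_Suc_shift ac_simps del: sum.lessThan_Suc)
  finally show ?thesis .
qed simp

lemma prime_dvd_pred_power_Suc:
  assumes "prime p"
  shows "p dvd (p - 1) ^ p + 1"
proof -
  have "[int p - 1 = - 1] (mod int p)" by (simp add: cong_iff_dvd_diff)
  then have "[(int p - 1) ^ p + 1 = (- 1) ^ p + 1] (mod int p)" by (intro cong_add cong_pow) auto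
  moreover have "int p dvd (- 1) ^ p + 1"
  proof (cases "p = 2")
    case False
    then have "odd p" using assms prime_odd_nat prime_ge_2_nat by (metis le_neq_implies_less)
    then show ?thesis by simp
  qed simp
  ultimately have "int p dvd (int p - 1) ^ p + 1" by (simp add: cong_dvd_iff)
  moreover have "int ((p - 1) ^ p + 1) = (int p - 1) ^ p + 1"
    using prime_gt_0_nat[OF assms] by (simp add: of_nat_diff)
  ultimately show ?thesis by (metis of_nat_dvd_iff)
qed

locale cyclic_action =
  fixes p :: nat and \<sigma> :: "'k::field \<Rightarrow> 'k"
  assumes prime_p: "prime p"
    and sigma_mult: "\<sigma> (x * y) = \<sigma> x * \<sigma> y"
    and sigma_one: "\<sigma> 1 = 1"
    and sigma_period: "(\<sigma> ^^ p) x = x"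
begin

lemma p_pos: "0 < p"
  using prime_p prime_gt_0_nat by blast

lemma sigma_nonzero: "x \<noteq> 0 \<Longrightarrow> \<sigma> x \<noteq> 0"
  using sigma_mult[of x "inverse x"] by (auto simp: sigma_one)

lemma sigma_power: "\<sigma> (x ^ n) = \<sigma> x ^ n"
  by (induction n) (simp_all add: sigma_mult sigma_one)

lemma sigma_prod: "\<sigma> (\<Prod>i\<in>A. f i) = (\<Prod>i\<in>A. \<sigma> (f i))"
  by (induction A rule: infinite_finite_induct) (simp_all add: sigma_mult sigma_one)

lemma funpow_sigma_mult: "(\<sigma> ^^ i) (x * y) = (\<sigma> ^^ i) x * (\<sigma> ^^ i) y"
  by (induction i) (simp_all add: sigma_mult)

lemma funpow_sigma_power: "(\<sigma> ^^ i) (x ^ n) = (\<sigma> ^^ i) x ^ n"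
  by (induction i) (simp_all add: sigma_power)

lemma funpow_sigma_prod: "(\<sigma> ^^ i) (\<Prod>j\<in>A. f j) = (\<Prod>j\<in>A. (\<sigma> ^^ i) (f j))"
  by (induction i) (simp_all add: sigma_prod)

lemma funpow_sigma_nonzero: "x \<noteq> 0 \<Longrightarrow> (\<sigma> ^^ i) x \<noteq> 0"
  by (induction i) (simp_all add: sigma_nonzero)

lemma same_cls_sigma:
  assumes "same_cls p x y"
  shows "same_cls p (\<sigma> x) (\<sigma> y)"
proof -
  obtain z where z: "x \<noteq> 0" "y \<noteq> 0" "z \<noteq> 0" "x = y * z ^ p"
    using assms by (auto simp: same_cls_def)
  then have "\<sigma> x = \<sigma> y * \<sigma> z ^ p" by (simp add: sigma_mult sigma_power)
  then show ?thesis
    using z sigma_nonzero unfolding same_cls_def by (intro conjI exI[of _ "\<sigma> z"]) auto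
qed

lemma Jnorm_mult: "Jnorm p \<sigma> (x * y) = Jnorm p \<sigma> x * Jnorm p \<sigma> y"
  by (simp add: Jnorm_def funpow_sigma_mult prod.distrib)

lemma Jnorm_power: "Jnorm p \<sigma> (x ^ n) = Jnorm p \<sigma> x ^ n"
  by (simp add: Jnorm_def funpow_sigma_power prod_power_distrib)

lemma Jnorm_prod: "Jnorm p \<sigma> (\<Prod>i\<in>A. f i) = (\<Prod>i\<in>A. Jnorm p \<sigma> (f i))"
  unfolding Jnorm_def by (simp add: funpow_sigma_prod) (rule prod.swap)

lemma Jnorm_nonzero: "x \<noteq> 0 \<Longrightarrow> Jnorm p \<sigma> x \<noteq> 0"
  by (simp add: Jnorm_def funpow_sigma_nonzero)

lemma sigma_Jnorm: "\<sigma> (Jnorm p \<sigma> x) = Jnorm p \<sigma> x"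
proof -
  have "\<sigma> (Jnorm p \<sigma> x) = (\<Prod>i<p. (\<sigma> ^^ Suc i) x)"
    by (simp add: Jnorm_def sigma_prod)
  also have "\<dots> = Jnorm p \<sigma> x"
    unfolding Jnorm_def by (rule prod_lessThan_rotate) (simp add: sigma_period)
  finally show ?thesis .
qed

lemma Jnorm_sigma: "Jnorm p \<sigma> (\<sigma> x) = Jnorm p \<sigma> x"
proof -
  have "Jnorm p \<sigma> (\<sigma> x) = (\<Prod>i<p. (\<sigma> ^^ Suc i) x)"
    unfolding Jnorm_def by (simp only: funpow_Suc_right o_apply)
  also have "\<dots> = Jnorm p \<sigma> x"
    unfolding Jnorm_def by (rule prod_lessThan_rotate) (simp add: sigma_period)
  finally show ?thesis .
qed

lemma Jnorm_funpow_sigma: "Jnorm p \<sigma> ((\<sigma> ^^ j) x) = Jnorm p \<sigma> x"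
  by (induction j) (simp_all add: Jnorm_sigma)

text \<open>Since \<open>y ^ (p - 1)\<close> represents \<open>inverse y\<close> in \<open>J\<close>, \<open>sig_quot y\<close> represents
  \<open>\<sigma> y / y\<close>, i.e. \<open>(\<sigma> - 1) [y]\<close>.\<close>

definition sig_quot :: "'k \<Rightarrow> 'k" where
  "sig_quot y = \<sigma> y * y ^ (p - 1)"

lemma sig_quot_nonzero: "y \<noteq> 0 \<Longrightarrow> sig_quot y \<noteq> 0"
  by (simp add: sig_quot_def sigma_nonzero)

lemma sig_quot_mult: "sig_quot (x * y) = sig_quot x * sig_quot y"
  by (simp add: sig_quot_def sigma_mult power_mult_distrib mult_ac)

lemma sig_quot_one: "sig_quot 1 = 1"
  by (simp add: sig_quot_def sigma_one)

lemma sig_quot_power: "sig_quot (x ^ n) = sig_quot x ^ n"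
  by (induction n) (simp_all add: sig_quot_mult sig_quot_one)

lemma sig_quot_prod: "sig_quot (\<Prod>i\<in>A. f i) = (\<Prod>i\<in>A. sig_quot (f i))"
  by (induction A rule: infinite_finite_induct) (simp_all add: sig_quot_mult sig_quot_one)

lemma funpow_sig_quot_power: "(sig_quot ^^ k) (x ^ n) = (sig_quot ^^ k) x ^ n"
  by (induction k) (simp_all add: sig_quot_power)

lemma funpow_sig_quot_prod: "(sig_quot ^^ k) (\<Prod>i\<in>A. f i) = (\<Prod>i\<in>A. (sig_quot ^^ k) (f i))"
  by (induction k) (simp_all add: sig_quot_prod)

lemma funpow_sig_quot_nonzero: "y \<noteq> 0 \<Longrightarrow> (sig_quot ^^ k) y \<noteq> 0"
  by (induction k) (simp_all add: sig_quot_nonzero)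

lemma sig_quot_mult_self: "sig_quot y * y = \<sigma> y * y ^ p"
  using p_pos by (simp add: sig_quot_def mult.assoc power_Suc2[symmetric])

lemma same_cls_sig_quot: "same_cls p x y \<Longrightarrow> same_cls p (sig_quot x) (sig_quot y)"
  unfolding sig_quot_def by (intro same_cls_mult same_cls_sigma same_cls_power)

lemma same_cls_funpow_sig_quot_one: "same_cls p y 1 \<Longrightarrow> same_cls p ((sig_quot ^^ k) y) 1"
  by (induction k) (auto dest: same_cls_sig_quot simp: sig_quot_one)

lemma same_cls_sig_quot_one_iff:
  assumes "y \<noteq> 0"
  shows "same_cls p (sig_quot y) 1 \<longleftrightarrow> same_cls p (\<sigma> y) y"
proof -
  have quot: "same_cls p (sig_quot y * y) (\<sigma> y)"
    unfolding sig_quot_mult_self by (rule same_cls_mult_pth_power[OF sigma_nonzero[OF assms] assms])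
  show ?thesis
  proof
    assume "same_cls p (sig_quot y) 1"
    then have "same_cls p (sig_quot y * y) (1 * y)"
      using same_cls_mult same_cls_refl[OF assms] by blast
    then show "same_cls p (\<sigma> y) y"
      using same_cls_trans[OF same_cls_sym[OF quot]] by simp
  next
    assume "same_cls p (\<sigma> y) y"
    then have "same_cls p (y * sig_quot y) (y * 1)"
      using same_cls_trans[OF quot] by (simp add: mult.commute)
    then show "same_cls p (sig_quot y) 1"
      using same_cls_cancel_left assms by blast
  qed
qed

lemma funpow_sig_quot_eq:
  "(sig_quot ^^ k) y = (\<Prod>i\<le>k. (\<sigma> ^^ i) y ^ ((k choose i) * (p - 1) ^ (k - i)))"
proof (induction k)
  case (Suc k)
  define A where "A i = (\<sigma> ^^ i) y" for i
  define a where "a k i = (k choose i) * (p - 1) ^ (k - i)" for k i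
  have a_Suc: "a (Suc k) i = (p - 1) * a k i + (if i = 0 then 0 else a k (i - 1))" for i
  proof (cases i)
    case (Suc j)
    show ?thesis
    proof (cases "j < k")
      case True
      then have "k - j = Suc (k - Suc j)" by simp
      then show ?thesis by (simp add: Suc a_def add_mult_distrib add_mult_distrib2 mult_ac)
    qed (simp add: Suc a_def binomial_eq_0)
  qed (simp add: a_def)
  have "(sig_quot ^^ Suc k) y = sig_quot (\<Prod>i\<le>k. A i ^ a k i)"
    using Suc by (simp add: A_def a_def)
  moreover have "\<sigma> (\<Prod>i\<le>k. A i ^ a k i) = (\<Prod>i\<le>Suc k. A i ^ (if i = 0 then 0 else a k (i - 1)))"
    by (simp add: prod.atMost_Suc_shift sigma_prod sigma_power A_def del: prod.atMost_Suc)
  moreover have "(\<Prod>i\<le>k. A i ^ a k i) ^ (p - 1) = (\<Prod>i\<le>Suc k. A i ^ ((p - 1) * a k i))"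
    by (simp add: a_def prod_power_distrib power_mult[symmetric] mult.commute binomial_eq_0)
  ultimately have "(sig_quot ^^ Suc k) y
      = (\<Prod>i\<le>Suc k. A i ^ (if i = 0 then 0 else a k (i - 1))) * (\<Prod>i\<le>Suc k. A i ^ ((p - 1) * a k i))"
    by (simp add: sig_quot_def)
  also have "\<dots> = (\<Prod>i\<le>Suc k. A i ^ a (Suc k) i)"
    by (simp add: a_Suc power_add prod.distrib[symmetric] mult.commute)
  finally show ?case by (simp add: A_def a_def)
qed simp

lemma same_cls_funpow_sig_quot_p:
  assumes "y \<noteq> 0"
  shows "same_cls p ((sig_quot ^^ p) y) 1"
proof -
  define f where "f i = (\<sigma> ^^ i) y ^ ((p choose i) * (p - 1) ^ (p - i))" for i
  have "{..p} = insert 0 (insert p {1..<p})" using p_pos by auto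
  then have "(sig_quot ^^ p) y = f 0 * f p * (\<Prod>i\<in>{1..<p}. f i)"
    using p_pos by (simp add: funpow_sig_quot_eq f_def mult.assoc)
  also have "f 0 * f p = y ^ ((p - 1) ^ p + 1)"
    by (simp add: f_def sigma_period)
  finally have "(sig_quot ^^ p) y = y ^ ((p - 1) ^ p + 1) * (\<Prod>i\<in>{1..<p}. f i)" .
  moreover have "same_cls p (y ^ ((p - 1) ^ p + 1)) 1"
    using same_cls_power_dvd[OF assms prime_dvd_pred_power_Suc[OF prime_p]] .
  moreover have "same_cls p (\<Prod>i\<in>{1..<p}. f i) (\<Prod>i\<in>{1..<p}. 1)"
  proof (rule same_cls_prod)
    fix i assume "i \<in> {1..<p}"
    then have "p dvd (p choose i)" using dvd_choose_prime prime_p by auto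
    then show "same_cls p (f i) 1"
      unfolding f_def by (intro same_cls_power_dvd funpow_sigma_nonzero assms) simp
  qed simp
  ultimately show ?thesis using same_cls_mult by fastforce
qed

lemma Mcyc_intro: "same_cls p x (\<Prod>i<p. (\<sigma> ^^ i) g ^ c i) \<Longrightarrow> x \<in> Mcyc p \<sigma> g"
  using same_cls_nonzero unfolding Mcyc_def by blast

lemma self_in_Mcyc:
  assumes "g \<noteq> 0"
  shows "g \<in> Mcyc p \<sigma> g"
proof -
  have "(\<Prod>i<p. (\<sigma> ^^ i) g ^ (if i = 0 then 1 else 0)) = (\<Prod>i<p. if i = 0 then g else 1)"
    by (rule prod.cong) auto
  also have "\<dots> = g"
    using p_pos by (simp add: prod.delta)
  finally have "same_cls p g (\<Prod>i<p. (\<sigma> ^^ i) g ^ (if i = 0 then 1 else 0))"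
    using same_cls_refl[OF assms] by simp
  then show ?thesis by (rule Mcyc_intro)
qed

lemma one_in_Mcyc: "1 \<in> Mcyc p \<sigma> g"
  using Mcyc_intro[of 1 g "\<lambda>_. 0"] same_cls_refl[of 1 p] by simp

lemma Mcyc_mult:
  assumes "x \<in> Mcyc p \<sigma> g" "y \<in> Mcyc p \<sigma> g"
  shows "x * y \<in> Mcyc p \<sigma> g"
proof -
  obtain c d where "same_cls p x (\<Prod>i<p. (\<sigma> ^^ i) g ^ c i)" "same_cls p y (\<Prod>i<p. (\<sigma> ^^ i) g ^ d i)"
    using assms unfolding Mcyc_def by blast
  then have "same_cls p (x * y) (\<Prod>i<p. (\<sigma> ^^ i) g ^ (c i + d i))"
    using same_cls_mult by (fastforce simp: power_add prod.distrib)
  then show ?thesis by (rule Mcyc_intro)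
qed

lemma Mcyc_power: "x \<in> Mcyc p \<sigma> g \<Longrightarrow> x ^ n \<in> Mcyc p \<sigma> g"
  by (induction n) (simp_all add: one_in_Mcyc Mcyc_mult)

lemma Mcyc_same_cls:
  assumes "x \<in> Mcyc p \<sigma> g" "same_cls p y x"
  shows "y \<in> Mcyc p \<sigma> g"
proof -
  obtain c where "same_cls p x (\<Prod>i<p. (\<sigma> ^^ i) g ^ c i)"
    using assms(1) unfolding Mcyc_def by blast
  then show ?thesis by (rule Mcyc_intro[OF same_cls_trans[OF assms(2)]])
qed

lemma sigma_in_Mcyc:
  assumes "x \<in> Mcyc p \<sigma> g"
  shows "\<sigma> x \<in> Mcyc p \<sigma> g"
proof -
  obtain c where c: "same_cls p x (\<Prod>i<p. (\<sigma> ^^ i) g ^ c i)"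
    using assms unfolding Mcyc_def by blast
  define c' where "c' i = (if i = 0 then c (p - 1) else c (i - 1))" for i
  have "\<sigma> (\<Prod>i<p. (\<sigma> ^^ i) g ^ c i) = (\<Prod>i<p. (\<sigma> ^^ Suc i) g ^ c' (Suc i))"
    by (simp add: sigma_prod sigma_power c'_def)
  also have "\<dots> = (\<Prod>i<p. (\<sigma> ^^ i) g ^ c' i)"
    by (rule prod_lessThan_rotate[where f = "\<lambda>i. (\<sigma> ^^ i) g ^ c' i"])
      (simp add: sigma_period c'_def p_pos)
  finally have "same_cls p (\<sigma> x) (\<Prod>i<p. (\<sigma> ^^ i) g ^ c' i)"
    using same_cls_sigma[OF c] by simp
  then show ?thesis by (rule Mcyc_intro)
qed

lemma sig_quot_in_Mcyc: "x \<in> Mcyc p \<sigma> g \<Longrightarrow> sig_quot x \<in> Mcyc p \<sigma> g"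
  unfolding sig_quot_def by (intro Mcyc_mult sigma_in_Mcyc Mcyc_power)

lemma funpow_sig_quot_in_Mcyc: "g \<noteq> 0 \<Longrightarrow> (sig_quot ^^ k) g \<in> Mcyc p \<sigma> g"
  by (induction k) (simp_all add: self_in_Mcyc sig_quot_in_Mcyc)

lemma Mcyc_coordinates:
  assumes "g \<noteq> 0" "same_cls p (\<sigma> g) (g * c)" "same_cls p (\<sigma> c) c" "x \<in> Mcyc p \<sigma> g"
  obtains S T where "same_cls p x (g ^ S * c ^ T)"
proof -
  have conj: "same_cls p ((\<sigma> ^^ i) g) (g * c ^ i)" for i
  proof (induction i)
    case (Suc i)
    have "same_cls p ((\<sigma> ^^ Suc i) g) (\<sigma> g * \<sigma> c ^ i)"
      using same_cls_sigma[OF Suc] by (simp add: sigma_mult sigma_power)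
    also have "same_cls p (\<sigma> g * \<sigma> c ^ i) (g * c * c ^ i)"
      by (intro same_cls_mult same_cls_power assms(2,3))
    finally show ?case by (simp add: mult.assoc)
  qed (simp add: same_cls_refl assms(1))
  obtain e where e: "same_cls p x (\<Prod>i<p. (\<sigma> ^^ i) g ^ e i)"
    using assms(4) unfolding Mcyc_def by blast
  also have "same_cls p (\<Prod>i<p. (\<sigma> ^^ i) g ^ e i) (\<Prod>i<p. (g * c ^ i) ^ e i)"
    by (intro same_cls_prod same_cls_power conj) simp
  also have "(\<Prod>i<p. (g * c ^ i) ^ e i) = g ^ (\<Sum>i<p. e i) * c ^ (\<Sum>i<p. i * e i)"
    by (simp add: power_mult_distrib prod.distrib power_sum power_mult[symmetric])
  finally show thesis using that by blast
qed

lemma same_cls_funpow_sig_quot_mono: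
  assumes "same_cls p ((sig_quot ^^ n) y) 1" "n \<le> k"
  shows "same_cls p ((sig_quot ^^ k) y) 1"
proof -
  have "(sig_quot ^^ k) y = (sig_quot ^^ (k - n)) ((sig_quot ^^ n) y)"
    using assms(2) by (metis funpow_add le_add_diff_inverse2 o_apply)
  then show ?thesis using same_cls_funpow_sig_quot_one[OF assms(1)] by simp
qed

lemma same_cls_sig_quot_chain_lowest:
  assumes "y \<noteq> 0" "same_cls p ((sig_quot ^^ Suc n) y) 1" "i \<le> n" "\<And>j. j < i \<Longrightarrow> e j = 0"
    and "same_cls p (\<Prod>j<Suc n. (sig_quot ^^ j) y ^ e j) 1"
  shows "same_cls p ((sig_quot ^^ n) y ^ e i) 1"
proof -
  define X where "X k = (sig_quot ^^ k) y" for k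
  have X_shift: "(sig_quot ^^ k) (X j) = X (k + j)" for k j
    by (simp add: X_def funpow_add)
  (* Applying sig_quot^(n - i) sends term i to X n and every term j > i beyond X n. *)
  define k where "k = n - i"
  have "same_cls p ((sig_quot ^^ k) (\<Prod>j<Suc n. X j ^ e j)) 1"
    using same_cls_funpow_sig_quot_one assms(5) by (simp add: X_def)
  also have "(sig_quot ^^ k) (\<Prod>j<Suc n. X j ^ e j) = (\<Prod>j<Suc n. X (k + j) ^ e j)"
    by (simp only: funpow_sig_quot_prod funpow_sig_quot_power X_shift)
  finally have shifted: "same_cls p (\<Prod>j<Suc n. X (k + j) ^ e j) 1" .
  have "same_cls p (\<Prod>j<Suc n. X (k + j) ^ e j) (\<Prod>j<Suc n. if j = i then X n ^ e i else 1)"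
  proof (rule same_cls_prod)
    fix j assume "j \<in> {..<Suc n}"
    consider "j < i" | "j = i" | "i < j" by linarith
    then show "same_cls p (X (k + j) ^ e j) (if j = i then X n ^ e i else 1)"
    proof cases
      case 1
      then show ?thesis using assms(4) by (simp add: same_cls_refl)
    next
      case 2
      then show ?thesis using assms(1,3)
        by (simp add: k_def same_cls_refl X_def funpow_sig_quot_nonzero)
    next
      case 3
      then have "Suc n \<le> k + j" using assms(3) by (simp add: k_def)
      then show ?thesis
        using 3 same_cls_power[OF same_cls_funpow_sig_quot_mono[OF assms(2)], of "k + j" "e j"]
        by (simp add: X_def)
    qed
  qed simp
  also have "(\<Prod>j<Suc n. if j = i then X n ^ e i else 1) = X n ^ e i"
    using assms(3) by (simp add: prod.delta)
  finally show ?thesis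
    using same_cls_trans[OF same_cls_sym shifted] by (simp add: X_def)
qed

lemma cls_indep_sig_quot_chain:
  assumes "y \<noteq> 0" "\<not> same_cls p ((sig_quot ^^ n) y) 1" "same_cls p ((sig_quot ^^ Suc n) y) 1"
  shows "cls_indep p (Suc n) (\<lambda>i. (sig_quot ^^ i) y)"
  unfolding cls_indep_def
proof (intro allI impI)
  fix e i
  assume e: "(\<forall>i<Suc n. e i < p) \<and> same_cls p (\<Prod>i<Suc n. (sig_quot ^^ i) y ^ e i) 1"
    and "i < Suc n"
  then show "e i = 0"
  proof (induction i rule: less_induct)
    case (less i)
    then have "same_cls p ((sig_quot ^^ n) y ^ e i) 1"
      using same_cls_sig_quot_chain_lowest[OF assms(1,3)] by simp
    moreover have "e i < p" using less.prems by blast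
    ultimately show "e i = 0"
      using same_cls_one_of_power[OF prime_p] assms(1,2) funpow_sig_quot_nonzero
      by (metis dvd_imp_le not_le neq0_conv)
  qed
qed

lemma one_lt_p: "1 < p"
  using prime_p prime_gt_1_nat by blast

lemma sig_quot_not_same_cls_one:
  assumes "g \<noteq> 0" "Jdim_eq p (Mcyc p \<sigma> g) 2"
  shows "\<not> same_cls p (sig_quot g) 1"
proof
  assume "same_cls p (sig_quot g) 1"
  then have sigma_g: "same_cls p (\<sigma> g) (g * 1)"
    using same_cls_sig_quot_one_iff[OF assms(1)] by simp
  have "cls_spanned p (Mcyc p \<sigma> g) (Suc 0) (\<lambda>_. g)"
    unfolding cls_spanned_def
  proof
    fix x assume "x \<in> Mcyc p \<sigma> g"
    then obtain S T where "same_cls p x (g ^ S * 1 ^ T)"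
      using Mcyc_coordinates[OF assms(1) sigma_g] by (metis sigma_one same_cls_refl one_neq_zero)
    then show "\<exists>u. same_cls p x (\<Prod>j<Suc 0. g ^ u j)"
      by (intro exI[of _ "\<lambda>_. S"]) simp
  qed
  moreover obtain b where "\<And>i. i < 2 \<Longrightarrow> b i \<in> Mcyc p \<sigma> g" "cls_indep p 2 b"
    using Jdim_eq_obtain_basis[OF assms(2)] by metis
  ultimately have "2 \<le> Suc 0"
    using cls_indep_le_spanning[OF one_lt_p] assms(1) by blast
  then show False by simp
qed

lemma sig_quot_sig_quot_same_cls_one:
  assumes "g \<noteq> 0" "Jdim_eq p (Mcyc p \<sigma> g) 2"
  shows "same_cls p (sig_quot (sig_quot g)) 1"
proof -
  obtain b where b: "\<And>i. i < 2 \<Longrightarrow> b i \<noteq> 0" "cls_spanned p (Mcyc p \<sigma> g) 2 b"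
    using Jdim_eq_obtain_basis[OF assms(2)] by metis
  define n where "n = (LEAST n. same_cls p ((sig_quot ^^ n) g) 1)"
  have n: "same_cls p ((sig_quot ^^ n) g) 1"
    unfolding n_def by (rule LeastI[where P = "\<lambda>n. same_cls p ((sig_quot ^^ n) g) 1", OF same_cls_funpow_sig_quot_p[OF assms(1)]])
  have "n \<le> 2"
  proof (cases n)
    case (Suc m)
    then have "\<not> same_cls p ((sig_quot ^^ m) g) 1"
      using not_less_Least[of m "\<lambda>n. same_cls p ((sig_quot ^^ n) g) 1"] Suc by (simp add: n_def)
    then have "cls_indep p n (\<lambda>i. (sig_quot ^^ i) g)"
      using cls_indep_sig_quot_chain[OF assms(1)] n Suc by simp
    then show ?thesis
      by (rule cls_indep_le_spanning[OF one_lt_p _ _ b(2) b(1)])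
        (rule funpow_sig_quot_in_Mcyc[OF assms(1)])
  qed simp
  then show ?thesis
    using same_cls_funpow_sig_quot_mono[OF n, of 2] by (simp add: numeral_2_eq_2)
qed

lemma Jspan_subset_Jfixed_Mcyc:
  assumes "c \<in> Mcyc p \<sigma> g" "same_cls p (\<sigma> c) c"
  shows "Jspan p {c} \<subseteq> Jfixed p \<sigma> (Mcyc p \<sigma> g)"
proof
  fix x assume "x \<in> Jspan p {c}"
  then obtain n where n: "same_cls p x (c ^ n)"
    unfolding Jspan_singleton by blast
  have "same_cls p (\<sigma> x) (\<sigma> c ^ n)"
    using same_cls_sigma[OF n] by (simp add: sigma_power)
  also have "same_cls p (\<sigma> c ^ n) (c ^ n)" using same_cls_power[OF assms(2)] .
  also have "same_cls p (c ^ n) x" using same_cls_sym[OF n] .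
  finally have "same_cls p (\<sigma> x) x" .
  moreover have "x \<in> Mcyc p \<sigma> g"
    using Mcyc_same_cls[OF Mcyc_power[OF assms(1)]] n by blast
  ultimately show "x \<in> Jfixed p \<sigma> (Mcyc p \<sigma> g)" by (simp add: Jfixed_def)
qed

lemma Jfixed_Mcyc_subset_Jspan:
  assumes "g \<noteq> 0" "same_cls p (\<sigma> g) (g * c)" "same_cls p (\<sigma> c) c" "\<not> same_cls p c 1"
  shows "Jfixed p \<sigma> (Mcyc p \<sigma> g) \<subseteq> Jspan p {c}"
proof
  fix x assume "x \<in> Jfixed p \<sigma> (Mcyc p \<sigma> g)"
  then have x: "x \<in> Mcyc p \<sigma> g" "same_cls p (\<sigma> x) x" by (auto simp: Jfixed_def)
  obtain S T where ST: "same_cls p x (g ^ S * c ^ T)"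
    using Mcyc_coordinates[OF assms(1-3) x(1)] .
  have c_nonzero: "c \<noteq> 0" using same_cls_nonzero[OF assms(3)] by blast
  have "same_cls p (g ^ S * c ^ T) x" using same_cls_sym[OF ST] .
  also have "same_cls p x (\<sigma> x)" using same_cls_sym[OF x(2)] .
  also have "same_cls p (\<sigma> x) (\<sigma> g ^ S * \<sigma> c ^ T)"
    using same_cls_sigma[OF ST] by (simp add: sigma_mult sigma_power)
  also have "same_cls p (\<sigma> g ^ S * \<sigma> c ^ T) ((g * c) ^ S * c ^ T)"
    by (intro same_cls_mult same_cls_power assms(2,3))
  also have "(g * c) ^ S * c ^ T = (g ^ S * c ^ T) * c ^ S"
    by (simp add: power_mult_distrib mult_ac)
  finally have "same_cls p (c ^ S) 1"
    using same_cls_cancel_left[of p "g ^ S * c ^ T" 1] assms(1) c_nonzero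
    by (simp add: same_cls_sym)
  then have "p dvd S"
    using same_cls_one_of_power[OF prime_p] assms(4) c_nonzero by blast
  then have "same_cls p (g ^ S * c ^ T) (1 * c ^ T)"
    using assms(1) c_nonzero by (intro same_cls_mult same_cls_power_dvd same_cls_refl) simp_all
  then show "x \<in> Jspan p {c}"
    unfolding Jspan_singleton using same_cls_trans[OF ST] by auto
qed

lemma Jfixed_Mcyc_eq_Jspan_sig_quot:
  assumes "g \<noteq> 0" "\<not> same_cls p (sig_quot g) 1" "same_cls p (sig_quot (sig_quot g)) 1"
  shows "Jfixed p \<sigma> (Mcyc p \<sigma> g) = Jspan p {sig_quot g}"
proof
  have quot_fixed: "same_cls p (\<sigma> (sig_quot g)) (sig_quot g)"
    using assms(3) same_cls_sig_quot_one_iff[OF sig_quot_nonzero[OF assms(1)]] by simp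
  have "g * sig_quot g = \<sigma> g * g ^ p"
    by (simp add: mult.commute[of g] sig_quot_mult_self)
  then have "same_cls p (\<sigma> g) (g * sig_quot g)"
    using same_cls_sym[OF same_cls_mult_pth_power[of "\<sigma> g" g p]] sigma_nonzero assms(1) by simp
  then show "Jfixed p \<sigma> (Mcyc p \<sigma> g) \<subseteq> Jspan p {sig_quot g}"
    using Jfixed_Mcyc_subset_Jspan[OF assms(1) _ quot_fixed assms(2)] by blast
  show "Jspan p {sig_quot g} \<subseteq> Jfixed p \<sigma> (Mcyc p \<sigma> g)"
    using Jspan_subset_Jfixed_Mcyc[OF sig_quot_in_Mcyc[OF self_in_Mcyc[OF assms(1)]] quot_fixed] .
qed

end

section \<open>Kummer extensions\<close>

locale kummer_extension =
  fixes p :: nat and F :: "'k::field set" and \<xi> a \<delta> :: 'k and \<sigma> :: "'k \<Rightarrow> 'k"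
  assumes p_prime: "prime p" and p_gt2: "p > 2"
    and F_zero: "0 \<in> F" and F_one: "1 \<in> F"
    and F_mult: "\<And>x y. x \<in> F \<Longrightarrow> y \<in> F \<Longrightarrow> x * y \<in> F"
    and F_inverse: "\<And>x. x \<in> F \<Longrightarrow> inverse x \<in> F"
    and char: "of_nat p \<noteq> (0::'k)"
    and xi_F: "\<xi> \<in> F" and xi_root: "\<xi> ^ p = 1"
    and xi_prim: "\<And>k. 0 < k \<Longrightarrow> k < p \<Longrightarrow> \<xi> ^ k \<noteq> 1"
    and a_F: "a \<in> F" and a_not_pth_power: "\<not> (\<exists>b\<in>F. b ^ p = a)"
    and delta_power: "\<delta> ^ p = a"
    and K_gen: "\<And>x. \<exists>c. (\<forall>i. c i \<in> F) \<and> x = (\<Sum>i<p. c i * \<delta> ^ i)"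
    and sigma_add: "\<And>x y. \<sigma> (x + y) = \<sigma> x + \<sigma> y"
    and sigma_mult: "\<And>x y. \<sigma> (x * y) = \<sigma> x * \<sigma> y"
    and sigma_F: "\<And>x. x \<in> F \<Longrightarrow> \<sigma> x = x"
    and sigma_delta: "\<sigma> \<delta> = \<xi> * \<delta>"
begin

lemma xi_power_power_p: "(\<xi> ^ j) ^ p = 1"
  by (metis power_mult mult.commute power_one xi_root)

lemma F_power: "x \<in> F \<Longrightarrow> x ^ n \<in> F"
  by (induction n) (simp_all add: F_one F_mult)

lemma sigma_sum: "\<sigma> (\<Sum>i\<in>A. f i) = (\<Sum>i\<in>A. \<sigma> (f i))"
  by (induction A rule: infinite_finite_induct) (simp_all add: sigma_add sigma_F F_zero)

lemma funpow_sigma_expansion: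
  assumes "\<forall>j. c j \<in> F"
  shows "(\<sigma> ^^ i) (\<Sum>j<p. c j * \<delta> ^ j) = (\<Sum>j<p. c j * (\<xi> ^ j) ^ i * \<delta> ^ j)"
proof (induction i)
  case (Suc i)
  have sigma_power: "\<sigma> (y ^ n) = \<sigma> y ^ n" for y n
    by (induction n) (simp_all add: sigma_mult sigma_F F_one)
  show ?case
    using Suc assms
    by (simp add: sigma_sum sigma_mult sigma_power sigma_F xi_F sigma_delta power_mult_distrib mult_ac)
qed simp

sublocale cyclic_action p \<sigma>
proof
  fix x
  obtain c where c: "\<forall>j. c j \<in> F" "x = (\<Sum>j<p. c j * \<delta> ^ j)"
    using K_gen by blast
  then show "(\<sigma> ^^ p) x = x"
    using funpow_sigma_expansion[OF c(1), of p] c(2) by (simp add: xi_power_power_p)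
qed (simp_all add: p_prime sigma_mult sigma_F F_one)

lemma a_nonzero: "a \<noteq> 0"
  using a_not_pth_power F_zero p_pos by force

lemma delta_nonzero: "\<delta> \<noteq> 0"
  using delta_power a_nonzero p_pos by auto

lemma xi_power_eq_one_iff: "\<xi> ^ n = 1 \<longleftrightarrow> p dvd n"
proof -
  have "\<xi> ^ n = \<xi> ^ (n mod p)"
    by (metis div_mult_mod_eq power_add power_mult power_one xi_root mult.commute mult_1)
  moreover have "\<xi> ^ (n mod p) = 1 \<longleftrightarrow> n mod p = 0"
    using xi_prim[of "n mod p"] p_pos by auto
  ultimately show ?thesis by (simp add: dvd_eq_mod_eq_0)
qed

lemma sum_powers_xi_power: "(\<Sum>i<p. (\<xi> ^ j) ^ i) = (if p dvd j then of_nat p else 0)"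
proof (cases "p dvd j")
  case False
  then have "\<xi> ^ j \<noteq> 1" by (simp add: xi_power_eq_one_iff)
  then show ?thesis using False xi_power_power_p by (simp add: geometric_sum)
next
  case True
  then have "\<xi> ^ j = 1" by (simp add: xi_power_eq_one_iff)
  then show ?thesis using True by simp
qed

lemma fixed_imp_in_F:
  assumes "\<sigma> x = x"
  shows "x \<in> F"
proof -
  obtain c where c: "\<forall>j. c j \<in> F" "x = (\<Sum>j<p. c j * \<delta> ^ j)"
    using K_gen by blast
  have "of_nat p * x = (\<Sum>i<p. (\<sigma> ^^ i) x)"
    by (simp add: funpow_fixed_point[where f = \<sigma>, OF assms])
  also have "\<dots> = (\<Sum>i<p. \<Sum>j<p. c j * (\<xi> ^ j) ^ i * \<delta> ^ j)"
    using funpow_sigma_expansion[OF c(1)] c(2) by simp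
  also have "\<dots> = (\<Sum>j<p. c j * \<delta> ^ j * (\<Sum>i<p. (\<xi> ^ j) ^ i))"
    by (subst sum.swap) (simp add: sum_distrib_left mult_ac)
  also have "\<dots> = (\<Sum>j<p. if j = 0 then of_nat p * c 0 else 0)"
    by (intro sum.cong) (auto simp: sum_powers_xi_power dvd_imp_le)
  also have "\<dots> = of_nat p * c 0"
    using p_pos by simp
  finally show ?thesis using char c(1) by simp
qed

lemma Jnorm_in_F: "Jnorm p \<sigma> x \<in> F"
  by (rule fixed_imp_in_F) (rule sigma_Jnorm)

lemma Jnorm_of_F: "x \<in> F \<Longrightarrow> Jnorm p \<sigma> x = x ^ p"
  by (simp add: Jnorm_def funpow_fixed_point sigma_F)

lemma prod_powers_xi: "(\<Prod>i<p. \<xi> ^ i) = 1"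
proof -
  have "odd p" using p_prime p_gt2 prime_odd_nat by blast
  then obtain q where "p - 1 = 2 * q" by (metis dvd_def odd_two_times_div_two_nat dvd_triv_left)
  then have "(\<Sum>i<p. i) = p * q"
    using Sum_Ico_nat[of 0 p] by (simp add: atLeast0LessThan)
  then show ?thesis by (simp add: power_sum[symmetric] power_mult xi_root)
qed

lemma funpow_sigma_delta: "(\<sigma> ^^ i) \<delta> = \<xi> ^ i * \<delta>"
  by (induction i) (simp_all add: sigma_mult sigma_delta sigma_F F_power xi_F)

lemma Jnorm_delta: "Jnorm p \<sigma> \<delta> = a"
  by (simp add: Jnorm_def funpow_sigma_delta prod.distrib prod_powers_xi delta_power)

lemma pth_root_of_unity_eq_xi_power:
  assumes "t ^ p = 1"
  obtains m where "m < p" "t = \<xi> ^ m"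
proof -
  (* s m = t / xi^m; the geometric sums of the s m add up to p, so one of them is nonzero,
     which forces s m = 1. *)
  define s where "s m = t * \<xi> ^ ((p - 1) * m)" for m
  have "(\<Sum>m<p. \<Sum>j<p. s m ^ j) = (\<Sum>j<p. t ^ j * (\<Sum>m<p. (\<xi> ^ ((p - 1) * j)) ^ m))"
    by (subst sum.swap) (simp add: s_def sum_distrib_left power_mult_distrib power_mult[symmetric] mult_ac)
  also have "\<dots> = (\<Sum>j<p. if j = 0 then of_nat p else 0)"
  proof (intro sum.cong refl)
    fix j assume "j \<in> {..<p}"
    then have "p dvd j \<longleftrightarrow> j = 0" by (auto dest: dvd_imp_le)
    moreover have "\<not> p dvd p - 1" using p_gt2 by (auto dest: dvd_imp_le)
    ultimately have "p dvd (p - 1) * j \<longleftrightarrow> j = 0"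
      using prime_dvd_mult_iff[OF p_prime] by simp
    then show "t ^ j * (\<Sum>m<p. (\<xi> ^ ((p - 1) * j)) ^ m) = (if j = 0 then of_nat p else 0)"
      by (simp add: sum_powers_xi_power)
  qed
  also have "\<dots> \<noteq> 0" using p_pos char by simp
  finally have "\<not> (\<forall>m\<in>{..<p}. (\<Sum>j<p. s m ^ j) = 0)"
    by (rule contrapos_nn) (rule sum.neutral)
  then obtain m where m: "m < p" "(\<Sum>j<p. s m ^ j) \<noteq> 0"
    by blast
  have "s m ^ p = 1" using assms xi_power_power_p by (simp add: s_def power_mult_distrib)
  then have "s m = 1" using m(2) geometric_sum[of "s m" p] by auto
  moreover have "\<xi> ^ ((p - 1) * m) * \<xi> ^ m = 1"
    using p_pos by (simp add: power_add[symmetric] xi_power_eq_one_iff add.commute[of _ m] mult_Suc[symmetric])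
  ultimately have "t = \<xi> ^ m" by (metis s_def mult.assoc mult_1 mult_1_right)
  then show thesis using that m(1) by blast
qed

lemma hilbert90:
  assumes "Jnorm p \<sigma> w = 1"
  obtains u where "u \<noteq> 0" "w * \<sigma> u = u"
proof -
  define W where "W i = (\<Prod>l<i. (\<sigma> ^^ l) w)" for i
  have W_Suc: "W (Suc i) = w * \<sigma> (W i)" for i
    by (simp add: W_def prod.lessThan_Suc_shift sigma_prod del: prod.lessThan_Suc)
  have W_p: "W p = W 0" using assms by (simp add: W_def Jnorm_def)
  have "(\<Sum>j<p. \<Sum>i<p. W i * (\<xi> ^ i) ^ j) = (\<Sum>i<p. W i * (\<Sum>j<p. (\<xi> ^ i) ^ j))"
    by (subst sum.swap) (simp add: sum_distrib_left)
  also have "\<dots> = (\<Sum>i<p. if i = 0 then of_nat p else 0)"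
    by (intro sum.cong) (auto simp: sum_powers_xi_power W_def dvd_imp_le)
  also have "\<dots> \<noteq> 0" using p_pos char by simp
  finally have "\<not> (\<forall>j\<in>{..<p}. (\<Sum>i<p. W i * (\<xi> ^ i) ^ j) = 0)"
    by (rule contrapos_nn) (rule sum.neutral)
  then obtain j where j: "(\<Sum>i<p. W i * (\<xi> ^ i) ^ j) \<noteq> 0"
    by blast
  (* The classical Hilbert 90 element for theta = delta^j, with j chosen to make it nonzero. *)
  define u where "u = (\<Sum>i<p. W i * (\<sigma> ^^ i) (\<delta> ^ j))"
  have "u = (\<Sum>i<p. W i * (\<xi> ^ i) ^ j) * \<delta> ^ j"
    by (simp add: u_def funpow_sigma_delta funpow_sigma_power power_mult_distrib
        sum_distrib_left sum_distrib_right power_mult[symmetric] mult_ac)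
  then have "u \<noteq> 0" using j delta_nonzero by simp
  moreover have "w * \<sigma> u = u"
  proof -
    have "w * \<sigma> u = (\<Sum>i<p. W (Suc i) * (\<sigma> ^^ Suc i) (\<delta> ^ j))"
      by (simp add: u_def sigma_sum sum_distrib_left sigma_mult W_Suc mult.assoc)
    also have "\<dots> = u"
      unfolding u_def by (rule sum_lessThan_rotate) (simp add: W_p sigma_period)
    finally show ?thesis .
  qed
  ultimately show thesis using that by blast
qed

lemma a_power_ne_pth_power:
  assumes "g \<in> F" "\<not> p dvd e"
  shows "a ^ e \<noteq> g ^ p"
proof
  assume eq: "a ^ e = g ^ p"
  obtain x y where xy: "e * x = p * y + 1"
    using prime_not_dvd_imp_inverse_mod[OF p_prime assms(2)] by blast
  have "(g ^ x) ^ p = (a ^ e) ^ x"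
    by (simp add: eq power_mult[symmetric] mult.commute)
  also have "\<dots> = a * (a ^ y) ^ p"
    by (simp add: power_mult[symmetric] xy mult.commute[of p])
  finally have "(g ^ x * inverse (a ^ y)) ^ p = a"
    using a_nonzero by (simp add: power_mult_distrib power_inverse)
  moreover have "g ^ x * inverse (a ^ y) \<in> F"
    by (simp add: F_mult F_inverse F_power assms(1) a_F)
  ultimately show False using a_not_pth_power by blast
qed

lemma exists_twisted_element_of_norm_a:
  assumes "\<beta> \<noteq> 0" "Jnorm p \<sigma> \<beta> = \<xi>"
  obtains z where "z \<noteq> 0" "\<sigma> z = z * \<beta> ^ p" "Jnorm p \<sigma> z = a"
proof -
  define h where "h i = (\<sigma> ^^ i) \<beta> ^ i" for i
  define v where "v = (\<Prod>i<p. h i)"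
  have "\<xi> = (\<Prod>i<p. (\<sigma> ^^ Suc i) \<beta>)"
    using prod_lessThan_rotate[of "\<lambda>i. (\<sigma> ^^ i) \<beta>"] assms(2) by (simp add: Jnorm_def sigma_period)
  moreover have "\<sigma> v = (\<Prod>i<p. (\<sigma> ^^ Suc i) \<beta> ^ i)"
    by (simp add: v_def h_def sigma_prod sigma_power)
  ultimately have "\<sigma> v * \<xi> = (\<Prod>i<p. h (Suc i))"
    by (simp only: h_def prod.distrib[symmetric] power_Suc2)
  also have "\<dots> = v * \<beta> ^ p"
    using prod.lessThan_Suc_shift[of h p] by (simp add: v_def h_def sigma_period)
  finally have sigma_v: "\<sigma> v * \<xi> = v * \<beta> ^ p" .
  have "Jnorm p \<sigma> v = (\<Prod>i<p. \<xi> ^ i)"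
    by (simp add: v_def h_def Jnorm_prod Jnorm_power Jnorm_funpow_sigma assms(2))
  then have Jnorm_v: "Jnorm p \<sigma> v = 1" by (simp add: prod_powers_xi)
  have "v \<noteq> 0" using assms(1) by (simp add: v_def h_def funpow_sigma_nonzero)
  then have "v * \<delta> \<noteq> 0" using delta_nonzero by simp
  moreover have "\<sigma> (v * \<delta>) = v * \<delta> * \<beta> ^ p"
    using sigma_v by (simp add: sigma_mult sigma_delta mult_ac)
  moreover have "Jnorm p \<sigma> (v * \<delta>) = a"
    by (simp add: Jnorm_mult Jnorm_v Jnorm_delta)
  ultimately show thesis using that by blast
qed

lemma twist_exponent_dvd:
  assumes "\<beta> \<noteq> 0" "Jnorm p \<sigma> \<beta> = \<xi>" "\<sigma> y * \<beta> ^ (p * j) = y"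
    and "Jnorm p \<sigma> y = v ^ p" "v \<in> F" "v \<noteq> 0"
  shows "p dvd j"
proof (rule ccontr)
  assume "\<not> p dvd j"
  obtain z where z: "\<sigma> z = z * \<beta> ^ p" "Jnorm p \<sigma> z = a"
    using exists_twisted_element_of_norm_a[OF assms(1,2)] by blast
  (* f is sigma-fixed, so it lies in F, and f^p = N f = v^p a^j would make a^j a p-th power in F. *)
  define f where "f = y * z ^ j"
  have "\<sigma> f = (\<sigma> y * \<beta> ^ (p * j)) * z ^ j"
    by (simp add: f_def sigma_mult sigma_power z(1) power_mult_distrib power_mult[symmetric] mult_ac)
  then have "\<sigma> f = f" by (simp add: assms(3) f_def)
  then have "f ^ p = Jnorm p \<sigma> f"
    using Jnorm_of_F[OF fixed_imp_in_F] by simp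
  also have "\<dots> = v ^ p * a ^ j"
    by (simp add: f_def Jnorm_mult Jnorm_power assms(4) z(2))
  finally have "a ^ j = (f * inverse v) ^ p"
    using assms(6) by (simp add: power_mult_distrib power_inverse)
  moreover have "f * inverse v \<in> F"
    using fixed_imp_in_F[OF \<open>\<sigma> f = f\<close>] assms(5) by (simp add: F_mult F_inverse)
  ultimately show False
    using a_power_ne_pth_power \<open>\<not> p dvd j\<close> by blast
qed

lemma fixed_class_twisted_representative:
  assumes "Jnorm p \<sigma> \<beta> = \<xi>" "same_cls p (\<sigma> c) c" "Jnorm p \<sigma> c = 1"
  obtains u j where "u \<noteq> 0" "j < p" "\<sigma> (c * u ^ p) * \<beta> ^ (p * j) = c * u ^ p"
proof -
  obtain w where w: "\<sigma> c = c * w ^ p"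
    using assms(2) unfolding same_cls_def by blast
  have "Jnorm p \<sigma> w ^ p = 1"
    using Jnorm_sigma[of c] assms(3) by (simp add: w Jnorm_mult Jnorm_power)
  then obtain k where k: "k < p" "Jnorm p \<sigma> w = \<xi> ^ k"
    using pth_root_of_unity_eq_xi_power by blast
  (* j makes N (w beta^j) = xi^(k + j) = 1, so Hilbert 90 applies to w beta^j. *)
  define j where "j = (p - k) mod p"
  have "p dvd k + j" using k(1) by (cases "k = 0") (simp_all add: j_def)
  then have "Jnorm p \<sigma> (w * \<beta> ^ j) = 1"
    by (simp add: Jnorm_mult Jnorm_power k(2) assms(1) power_add[symmetric] xi_power_eq_one_iff)
  then obtain u where u: "u \<noteq> 0" "w * \<beta> ^ j * \<sigma> u = u"
    using hilbert90 by blast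
  have "\<sigma> (c * u ^ p) * \<beta> ^ (p * j) = c * (w * \<beta> ^ j * \<sigma> u) ^ p"
    by (simp add: sigma_mult sigma_power w power_mult_distrib power_mult[symmetric] mult_ac)
  then have "\<sigma> (c * u ^ p) * \<beta> ^ (p * j) = c * u ^ p"
    by (simp add: u(2))
  moreover have "j < p" using p_pos by (simp add: j_def)
  ultimately show thesis using that u(1) by blast
qed

lemma fixed_class_Jnorm_one_is_norm_class:
  assumes "\<beta> \<noteq> 0" "Jnorm p \<sigma> \<beta> = \<xi>" "same_cls p (\<sigma> c) c" "Jnorm p \<sigma> c = 1"
  obtains \<alpha> where "\<alpha> \<noteq> 0" "same_cls p c (Jnorm p \<sigma> \<alpha>)"
proof -
  obtain u j where u: "u \<noteq> 0" "j < p" and twisted: "\<sigma> (c * u ^ p) * \<beta> ^ (p * j) = c * u ^ p"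
    using fixed_class_twisted_representative[OF assms(2-4)] by blast
  define y where "y = c * u ^ p"
  have c_nonzero: "c \<noteq> 0" using same_cls_nonzero[OF assms(3)] by blast
  have Jnorm_y: "Jnorm p \<sigma> y = Jnorm p \<sigma> u ^ p"
    by (simp add: y_def Jnorm_mult Jnorm_power assms(4))
  have "p dvd j"
    using twist_exponent_dvd[OF assms(1,2) twisted[folded y_def] Jnorm_y Jnorm_in_F Jnorm_nonzero[OF u(1)]] .
  then have "j = 0" using u(2) by (auto dest: dvd_imp_le)
  then have "\<sigma> y = y" using twisted by (simp add: y_def)
  then have "y ^ p = Jnorm p \<sigma> u ^ p"
    using Jnorm_of_F[OF fixed_imp_in_F] Jnorm_y by simp
  then have "(y * inverse (Jnorm p \<sigma> u)) ^ p = 1"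
    using Jnorm_nonzero[OF u(1)] by (simp add: power_mult_distrib power_inverse)
  then obtain m where "y * inverse (Jnorm p \<sigma> u) = \<xi> ^ m"
    using pth_root_of_unity_eq_xi_power by blast
  then have "y = Jnorm p \<sigma> (\<beta> ^ m * u)"
    using Jnorm_nonzero[OF u(1)] assms(2) by (simp add: Jnorm_mult Jnorm_power field_simps)
  moreover have "same_cls p c y"
    unfolding y_def using same_cls_sym[OF same_cls_mult_pth_power[OF c_nonzero u(1)]] .
  moreover have "\<beta> ^ m * u \<noteq> 0" using assms(1) u(1) by simp
  ultimately show thesis using that by blast
qed

lemma Jfixed_Mcyc_eq_Jspan_Jnorm:
  assumes "\<beta> \<noteq> 0" "Jnorm p \<sigma> \<beta> = \<xi>" "g \<noteq> 0" "Jdim_eq p (Mcyc p \<sigma> g) 2"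
  obtains \<alpha> where "\<alpha> \<noteq> 0" "Jspan p {Jnorm p \<sigma> \<alpha>} = Jfixed p \<sigma> (Mcyc p \<sigma> g)"
proof -
  define c where "c = \<sigma> g * inverse g"
  have c_nonzero: "c \<noteq> 0" using assms(3) by (simp add: c_def sigma_nonzero)
  have "g ^ p = g * g ^ (p - 1)" using p_pos by (simp add: power_Suc[symmetric])
  then have "sig_quot g = c * g ^ p" using assms(3) by (simp add: c_def sig_quot_def)
  then have quot_c: "same_cls p (sig_quot g) c"
    using same_cls_mult_pth_power[OF c_nonzero assms(3)] by simp
  have "c * g = \<sigma> g" using assms(3) by (simp add: c_def)
  then have "Jnorm p \<sigma> c * Jnorm p \<sigma> g = Jnorm p \<sigma> g"
    by (metis Jnorm_mult Jnorm_sigma)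
  then have Jnorm_c: "Jnorm p \<sigma> c = 1"
    using Jnorm_nonzero[OF assms(3)] by simp
  have quot_fixed: "same_cls p (\<sigma> (sig_quot g)) (sig_quot g)"
    using sig_quot_sig_quot_same_cls_one[OF assms(3,4)]
      same_cls_sig_quot_one_iff[OF sig_quot_nonzero[OF assms(3)]] by simp
  have "same_cls p (\<sigma> c) (\<sigma> (sig_quot g))" using same_cls_sigma[OF same_cls_sym[OF quot_c]] .
  also note quot_fixed
  also note quot_c
  finally obtain \<alpha> where \<alpha>: "\<alpha> \<noteq> 0" "same_cls p c (Jnorm p \<sigma> \<alpha>)"
    using fixed_class_Jnorm_one_is_norm_class[OF assms(1,2) _ Jnorm_c] by blast
  have "Jspan p {Jnorm p \<sigma> \<alpha>} = Jspan p {sig_quot g}"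
    using Jspan_singleton_cong[OF same_cls_trans[OF quot_c \<alpha>(2)]] by simp
  also have "\<dots> = Jfixed p \<sigma> (Mcyc p \<sigma> g)"
    using Jfixed_Mcyc_eq_Jspan_sig_quot[OF assms(3) sig_quot_not_same_cls_one[OF assms(3,4)]
        sig_quot_sig_quot_same_cls_one[OF assms(3,4)]] by simp
  finally show thesis using that \<alpha>(1) by blast
qed

end

theorem mainTheorem8:
  fixes p :: nat and F :: "'k::field set" and \<xi> a \<delta> :: 'k and \<sigma> :: "'k \<Rightarrow> 'k"
  assumes p_prime: "prime p" and p_gt2: "p > 2"
    and F_sub: "0 \<in> F" "1 \<in> F" "\<And>x y. x \<in> F \<Longrightarrow> y \<in> F \<Longrightarrow> x + y \<in> F"
      "\<And>x. x \<in> F \<Longrightarrow> - x \<in> F" "\<And>x y. x \<in> F \<Longrightarrow> y \<in> F \<Longrightarrow> x * y \<in> F"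
      "\<And>x. x \<in> F \<Longrightarrow> inverse x \<in> F"
    and char: "of_nat p \<noteq> (0::'k)"
    and xi_F: "\<xi> \<in> F" and xi_root: "\<xi> ^ p = 1" and xi_prim: "\<And>k. 0 < k \<Longrightarrow> k < p \<Longrightarrow> \<xi> ^ k \<noteq> 1"
    and a_F: "a \<in> F" and a_nz: "a \<noteq> 0" and a_not_pow: "\<not> (\<exists>b\<in>F. b ^ p = a)"
    and delta: "\<delta> ^ p = a"
    and K_gen: "\<And>x. \<exists>c. (\<forall>i. c i \<in> F) \<and> x = (\<Sum>i<p. c i * \<delta> ^ i)"
    and sigma_add: "\<And>x y. \<sigma> (x + y) = \<sigma> x + \<sigma> y"
    and sigma_mult: "\<And>x y. \<sigma> (x * y) = \<sigma> x * \<sigma> y"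
    and sigma_bij: "bij \<sigma>"
    and sigma_F: "\<And>x. x \<in> F \<Longrightarrow> \<sigma> x = x"
    and sigma_delta: "\<sigma> \<delta> = \<xi> * \<delta>"
    and xi_norm: "\<exists>\<beta>. \<beta> \<noteq> 0 \<and> \<xi> = Jnorm p \<sigma> \<beta>"
  shows "\<forall>\<gamma>. \<gamma> \<noteq> 0 \<and> Jdim_eq p (Mcyc p \<sigma> \<gamma>) 2 \<longrightarrow>
           (\<exists>\<alpha>. \<alpha> \<noteq> 0 \<and> Jspan p {Jnorm p \<sigma> \<alpha>} = Jfixed p \<sigma> (Mcyc p \<sigma> \<gamma>))"
proof (intro allI impI)
  fix \<gamma> assume \<gamma>: "\<gamma> \<noteq> 0 \<and> Jdim_eq p (Mcyc p \<sigma> \<gamma>) 2"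
  interpret kummer_extension p F \<xi> a \<delta> \<sigma>
    by (rule kummer_extension.intro) (fact assms)+
  obtain \<beta> where "\<beta> \<noteq> 0" "Jnorm p \<sigma> \<beta> = \<xi>"
    using xi_norm by metis
  then obtain \<alpha> where "\<alpha> \<noteq> 0" "Jspan p {Jnorm p \<sigma> \<alpha>} = Jfixed p \<sigma> (Mcyc p \<sigma> \<gamma>)"
    using Jfixed_Mcyc_eq_Jspan_Jnorm \<gamma> by blast
  then show "\<exists>\<alpha>. \<alpha> \<noteq> 0 \<and> Jspan p {Jnorm p \<sigma> \<alpha>} = Jfixed p \<sigma> (Mcyc p \<sigma> \<gamma>)"
    by blast
qed

end
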